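(* Let $n\ge 4$, $x_1,\dots,x_{n-1}>0$, $\gamma,\delta>0$ with $\gamma\ne1$, $\delta\ne1$, and set $x_0=1$. Let $\mathbf{P}=[p_{ij}]\in\mathbb{R}^{n\times n}$ be given by $p_{ij}=x_{j-1}/x_{i-1}$ for all $i,j$, except $p_{12}=\delta x_1$, $p_{21}=1/(\delta x_1)$, $p_{13}=\gamma x_2$, $p_{31}=1/(\gamma x_2)$. Then the characteristic polynomial of $\mathbf{P}$ is $$p_{\mathbf{P}}(\lambda)=\det(\mathbf{P}-\lambda\mathbf{I})=(-1)^n\lambda^{n-3}\left(\lambda^3-n\lambda^2-\left(\frac{\gamma}{\delta}+\frac{\delta}{\gamma}\right)-(n-3)\left(\gamma+\delta+\frac1\gamma+\frac1\delta\right)+4n-10\right).$$ *)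

theory Defs
  imports "Jordan_Normal_Form.Determinant"
begin

text \<open>The perturbed pairwise comparison matrix P (0-based indices; paper index i
 corresponds to row i-1). Here x 0 is replaced by 1 (the convention x_0 = 1).\<close>
definition pert_pcm :: "nat \<Rightarrow> (nat \<Rightarrow> real) \<Rightarrow> real \<Rightarrow> real \<Rightarrow> real mat" where
  "pert_pcm n x \<gamma> \<delta> =
     (let y = (\<lambda>k. if k = 0 then 1 else x k) in
      mat n n (\<lambda>(i, j).
        if i = 0 \<and> j = 1 then \<delta> * x 1
        else if i = 1 \<and> j = 0 then 1 / (\<delta> * x 1)
        else if i = 0 \<and> j = 2 then \<gamma> * x 2
        else if i = 2 \<and> j = 0 then 1 / (\<gamma> * x 2)
        else y j / y i))"

end

theory Submission
  imports Defs
begin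

text \<open>Conjugating \<open>P\<close> by \<open>diag(1, x\<^sub>1, \<dots>, x\<^sub>n\<^sub>-\<^sub>1)\<close> removes the \<open>x\<^sub>i\<close>: it becomes the
all-ones matrix except for the entries \<open>\<delta>, 1/\<delta>, \<gamma>, 1/\<gamma>\<close> at positions (1,2), (2,1), (1,3), (3,1).
In that matrix minus \<open>\<lambda>I\<close>, subtract the fourth row from every later row and then add every
later column to the fourth one: the result is block upper triangular with diagonal blocks
\<open>-\<lambda>I\<^sub>n\<^sub>-\<^sub>4\<close> and an explicit 4\<times>4 matrix, whose determinant is \<open>\<lambda>\<close> times the cubic factor.\<close>

lemma det_diag_conjugate:
  fixes A :: "'a :: field mat"
  assumes A: "A \<in> carrier_mat n n" and y: "\<And>i. i < n \<Longrightarrow> y i \<noteq> 0"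
  shows "det (mat n n (\<lambda>(i, j). y i * A $$ (i, j) / y j)) = det A"
proof -
  let ?D = "mat_diag n y" and ?D' = "mat_diag n (\<lambda>i. 1 / y i)"
  have inverse: "?D * ?D' = 1\<^sub>m n" "?D' * ?D = 1\<^sub>m n"
    unfolding mat_diag_diag using y by (auto intro!: eq_matI simp: mat_diag_def)
  have conjugate: "mat n n (\<lambda>(i, j). y i * A $$ (i, j) / y j) = ?D * A * ?D'"
    using A by (auto intro!: eq_matI simp: mat_diag_mult_left mat_diag_mult_right[OF mat_carrier])
  have "similar_mat (mat n n (\<lambda>(i, j). y i * A $$ (i, j) / y j)) A"
    by (rule similar_matI[OF _ inverse conjugate]) (use A in auto)
  then show ?thesis
    by (rule det_similar)
qed

lemma det_unit_lower_triangular: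
  assumes A: "A \<in> carrier_mat n n"
    and upper: "\<And>i j. i < j \<Longrightarrow> j < n \<Longrightarrow> A $$ (i, j) = 0"
    and diag: "\<And>i. i < n \<Longrightarrow> A $$ (i, i) = (1 :: 'a :: comm_ring_1)"
  shows "det A = 1"
  using A diag by (simp add: det_lower_triangular[OF upper A] prod_list_diag_prod)

lemma mult_add_row_to_later_rows:
  fixes B :: "'a :: comm_ring_1 mat"
  assumes B: "B \<in> carrier_mat n n" and k: "k < n"
  shows "mat n n (\<lambda>(i, j). if i = j then 1 else if k < i \<and> j = k then a else 0) * B
       = mat n n (\<lambda>(i, j). B $$ (i, j) + (if k < i then a * B $$ (k, j) else 0))"
    (is "?E * B = ?R")
proof (rule eq_matI)
  fix i j assume "i < dim_row ?R" "j < dim_col ?R"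
  then have i: "i < n" and j: "j < n" by auto
  have "(?E * B) $$ (i, j)
      = (\<Sum>l<n. (if l = i then B $$ (i, j) else 0) + (if k < i \<and> l = k then a * B $$ (k, j) else 0))"
    using i j B by (auto simp: scalar_prod_def atLeast0LessThan intro!: sum.cong)
  also have "\<dots> = ?R $$ (i, j)"
    using i j k by (simp add: sum.distrib)
  finally show "(?E * B) $$ (i, j) = ?R $$ (i, j)" .
qed (use B in auto)

lemma mult_add_later_cols:
  fixes B :: "'a :: comm_ring_1 mat"
  assumes B: "B \<in> carrier_mat n n"
  shows "B * mat n n (\<lambda>(i, j). if i = j then 1 else if k < i \<and> j = k then 1 else 0)
       = mat n n (\<lambda>(i, j). B $$ (i, j) + (if j = k then \<Sum>l\<in>{k<..<n}. B $$ (i, l) else 0))"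
    (is "B * ?E = ?R")
proof (rule eq_matI)
  fix i j assume "i < dim_row ?R" "j < dim_col ?R"
  then have i: "i < n" and j: "j < n" by auto
  have "(B * ?E) $$ (i, j)
      = (\<Sum>l<n. (if l = j then B $$ (i, j) else 0) + (if j = k \<and> k < l then B $$ (i, l) else 0))"
    using i j B by (auto simp: scalar_prod_def atLeast0LessThan intro!: sum.cong)
  also have "\<dots> = ?R $$ (i, j)"
    using i j by (auto simp: sum.distrib sum.inter_filter[symmetric] intro!: sum.cong)
  finally show "(B * ?E) $$ (i, j) = ?R $$ (i, j)" .
qed (use B in auto)

lemma det_char_mat_ones_border:
  fixes c :: "nat \<Rightarrow> nat \<Rightarrow> 'a :: idom"
  assumes k: "k < n" and ones: "\<And>i j. k \<le> i \<or> k \<le> j \<Longrightarrow> c i j = 1"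
  shows "det (mat n n (\<lambda>(i, j). c i j - (if i = j then t else 0))) =
    det (mat (Suc k) (Suc k) (\<lambda>(i, j). c i j - (if i = j then t else 0)
                                      + (if j = k then of_nat (n - k - 1) else 0)))
    * (-t) ^ (n - k - 1)"
proof -
  define m where "m = n - k - 1"
  have n: "n = Suc k + m" using k unfolding m_def by simp
  define A where "A = mat n n (\<lambda>(i, j). c i j - (if i = j then t else 0))"
  define K where "K = mat (Suc k) (Suc k) (\<lambda>(i, j). c i j - (if i = j then t else 0)
                                      + (if j = k then of_nat m else 0))"
  define L where "L = mat n n (\<lambda>(i, j). if i = j then 1 else if k < i \<and> j = k then -1 else (0 :: 'a))"
  define R where "R = mat n n (\<lambda>(i, j). if i = j then 1 else if k < i \<and> j = k then 1 else (0 :: 'a))"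
  \<comment> \<open>Below row \<open>k\<close>, row \<open>i\<close> minus row \<open>k\<close> is \<open>t (e\<^sub>k - e\<^sub>i)\<close>, so adding the later columns
    to column \<open>k\<close> clears that column below the diagonal block.\<close>
  define LA where "LA = mat n n (\<lambda>(i, j).
    if k < i then (if j = k then t else 0) - (if i = j then t else 0) else A $$ (i, j))"
  have A: "A \<in> carrier_mat n n" and L: "L \<in> carrier_mat n n" and R: "R \<in> carrier_mat n n"
    and LA: "LA \<in> carrier_mat n n"
    unfolding A_def L_def R_def LA_def by auto
  have "L * A = LA"
    unfolding L_def mult_add_row_to_later_rows[OF A k]
    by (auto intro!: eq_matI simp: LA_def A_def ones)
  moreover have "LA * R = four_block_mat K (mat (Suc k) m (\<lambda>_. 1)) (0\<^sub>m m (Suc k)) ((-t) \<cdot>\<^sub>m 1\<^sub>m m)"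
    unfolding R_def mult_add_later_cols[OF LA]
    by (intro eq_matI) (auto simp: LA_def A_def K_def ones n sum_negf)
  moreover have "det L = 1" "det R = 1"
    by (rule det_unit_lower_triangular[OF L] det_unit_lower_triangular[OF R]; simp add: L_def R_def)+
  ultimately have "det A = det (four_block_mat K (mat (Suc k) m (\<lambda>_. 1)) (0\<^sub>m m (Suc k)) ((-t) \<cdot>\<^sub>m 1\<^sub>m m))"
    using det_mult[OF L A] det_mult[OF mult_carrier_mat[OF L A] R] by simp
  also have "\<dots> = det K * (-t) ^ m"
    by (subst det_four_block_mat_lower_left_zero[of _ "Suc k" _ m]) (auto simp: K_def)
  finally show ?thesis unfolding A_def K_def m_def .
qed

lemma det_2x2:
  assumes A: "A \<in> carrier_mat 2 2"
  shows "det A = A $$ (0,0) * A $$ (1,1) - A $$ (0,1) * A $$ (1,0)"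
proof -
  have "mat_delete A 0 j \<in> carrier_mat 1 1" for j
    using mat_delete_carrier[OF A] by simp
  then show ?thesis
    using A by (subst laplace_expansion_row[OF A, of 0])
      (auto simp: cofactor_def det_single numeral_2_eq_2 mat_delete_def)
qed

lemma det_3x3:
  assumes A: "A \<in> carrier_mat 3 3"
  shows "det A =
      A $$ (0,0) * (A $$ (1,1) * A $$ (2,2) - A $$ (1,2) * A $$ (2,1))
    - A $$ (0,1) * (A $$ (1,0) * A $$ (2,2) - A $$ (1,2) * A $$ (2,0))
    + A $$ (0,2) * (A $$ (1,0) * A $$ (2,1) - A $$ (1,1) * A $$ (2,0))"
proof -
  have "mat_delete A 0 j \<in> carrier_mat 2 2" for j
    using mat_delete_carrier[OF A] by simp
  then show ?thesis
    using A by (subst laplace_expansion_row[OF A, of 0])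
      (auto simp: cofactor_def det_2x2 numeral_3_eq_3 numeral_2_eq_2 mat_delete_def algebra_simps)
qed

definition perturbed_ones :: "real \<Rightarrow> real \<Rightarrow> nat \<Rightarrow> nat \<Rightarrow> real" where
  "perturbed_ones \<gamma> \<delta> i j =
     (if i = 0 \<and> j = 1 then \<delta> else if i = 1 \<and> j = 0 then 1 / \<delta>
      else if i = 0 \<and> j = 2 then \<gamma> else if i = 2 \<and> j = 0 then 1 / \<gamma> else 1)"

lemma det_perturbed_ones_4:
  assumes "\<gamma> \<noteq> 0" "\<delta> \<noteq> 0"
  shows "det (mat 4 4 (\<lambda>(i, j). perturbed_ones \<gamma> \<delta> i j - (if i = j then t else 0)
                                      + (if j = 3 then s else 0))) =
    t * (t ^ 3 - (s + 4) * t ^ 2 - (\<gamma> / \<delta> + \<delta> / \<gamma>)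
         - (s + 1) * (\<gamma> + \<delta> + 1 / \<gamma> + 1 / \<delta>) + 4 * s + 6)"
proof -
  define K where "K = mat 4 4 (\<lambda>(i, j). perturbed_ones \<gamma> \<delta> i j - (if i = j then t else 0)
                                      + (if j = 3 then s else 0))"
  have K: "K \<in> carrier_mat 4 4"
    unfolding K_def by simp
  have minor: "mat_delete K 0 j \<in> carrier_mat 3 3" for j
    using mat_delete_carrier[OF K] by simp
  have "det K = (\<Sum>j<4. K $$ (0, j) * cofactor K 0 j)"
    by (rule laplace_expansion_row[OF K]) simp
  also have "\<dots> = K $$ (0,0) * cofactor K 0 0 + K $$ (0,1) * cofactor K 0 1
                  + K $$ (0,2) * cofactor K 0 2 + K $$ (0,3) * cofactor K 0 3"
    by (simp add: eval_nat_numeral)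
  also have "\<dots> = t * (t ^ 3 - (s + 4) * t ^ 2 - (\<gamma> / \<delta> + \<delta> / \<gamma>)
         - (s + 1) * (\<gamma> + \<delta> + 1 / \<gamma> + 1 / \<delta>) + 4 * s + 6)"
    unfolding cofactor_def det_3x3[OF minor] using assms
    by (simp add: K_def mat_delete_def perturbed_ones_def eval_nat_numeral field_simps)
  finally show ?thesis
    unfolding K_def .
qed

lemma det_pert_pcm_char_mat:
  assumes "\<And>k. 1 \<le> k \<Longrightarrow> k < n \<Longrightarrow> x k \<noteq> 0"
  shows "det (pert_pcm n x \<gamma> \<delta> - t \<cdot>\<^sub>m 1\<^sub>m n) =
    det (mat n n (\<lambda>(i, j). perturbed_ones \<gamma> \<delta> i j - (if i = j then t else 0)))"
proof -
  define y where "y k = (if k = 0 then 1 else x k)" for k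
  have y: "y k \<noteq> 0" if "k < n" for k
    using assms that unfolding y_def by simp
  have "det (pert_pcm n x \<gamma> \<delta> - t \<cdot>\<^sub>m 1\<^sub>m n) =
        det (mat n n (\<lambda>(i, j). y i * (pert_pcm n x \<gamma> \<delta> - t \<cdot>\<^sub>m 1\<^sub>m n) $$ (i, j) / y j))"
    by (rule det_diag_conjugate[symmetric]) (auto simp: pert_pcm_def y)
  also have "mat n n (\<lambda>(i, j). y i * (pert_pcm n x \<gamma> \<delta> - t \<cdot>\<^sub>m 1\<^sub>m n) $$ (i, j) / y j) =
             mat n n (\<lambda>(i, j). perturbed_ones \<gamma> \<delta> i j - (if i = j then t else 0))"
    using assms by (auto intro!: eq_matI simp: pert_pcm_def perturbed_ones_def y_def)
  finally show ?thesis .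
qed

theorem theorem3:
  fixes n :: nat and x :: "nat \<Rightarrow> real" and \<gamma> \<delta> t :: real
  assumes "n \<ge> 4"
    and "\<And>k. 1 \<le> k \<Longrightarrow> k \<le> n - 1 \<Longrightarrow> x k > 0"
    and "\<gamma> > 0" and "\<delta> > 0" and "\<gamma> \<noteq> 1" and "\<delta> \<noteq> 1"
  shows "det (pert_pcm n x \<gamma> \<delta> - t \<cdot>\<^sub>m 1\<^sub>m n) =
    (-1) ^ n * t ^ (n - 3) *
      (t ^ 3 - real n * t ^ 2 - (\<gamma> / \<delta> + \<delta> / \<gamma>)
       - (real n - 3) * (\<gamma> + \<delta> + 1 / \<gamma> + 1 / \<delta>) + 4 * real n - 10)"
proof -
  have ones: "perturbed_ones \<gamma> \<delta> i j = 1" if "3 \<le> i \<or> 3 \<le> j" for i j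
    using that by (auto simp: perturbed_ones_def)
  have "det (pert_pcm n x \<gamma> \<delta> - t \<cdot>\<^sub>m 1\<^sub>m n) =
    det (mat n n (\<lambda>(i, j). perturbed_ones \<gamma> \<delta> i j - (if i = j then t else 0)))"
    using assms(2) by (intro det_pert_pcm_char_mat) force
  also have "\<dots> = det (mat 4 4 (\<lambda>(i, j). perturbed_ones \<gamma> \<delta> i j - (if i = j then t else 0)
                                      + (if j = 3 then real (n - 4) else 0))) * (-t) ^ (n - 4)"
    using det_char_mat_ones_border[of 3 n "perturbed_ones \<gamma> \<delta>", OF _ ones] assms(1) by (simp cong: if_cong)
  also have "\<dots> = t * (-t) ^ (n - 4) * (t ^ 3 - real n * t ^ 2 - (\<gamma> / \<delta> + \<delta> / \<gamma>)
       - (real n - 3) * (\<gamma> + \<delta> + 1 / \<gamma> + 1 / \<delta>) + 4 * real n - 10)"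
    using assms(1,3,4) by (subst det_perturbed_ones_4) (auto simp: of_nat_diff algebra_simps)
  also have "t * (-t) ^ (n - 4) = (-1) ^ n * t ^ (n - 3)"
  proof -
    obtain m where "n = m + 4"
      using assms(1) by (metis le_add_diff_inverse2)
    then show ?thesis
      by (simp add: power_minus[of t] power_add)
  qed
  finally show ?thesis .
qed

end
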